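(* Let $G$ be a bus graph containing an $(A,k,B,l)$-variable-box (as defined below), together with $\mathcal{B}$-vertices $O^i_A$ ($i=1,\dots,k$) and $O^j_B$ ($j=1,\dots,l$) and edges $(O^i_A,o^i_A)$ and $(O^j_B,o^j_B)$ joined to the box. Then in any realization $\Gamma$ of $G$: (1) $\Gamma((O^i_A,o^i_A))$ is perpendicular to $\Gamma(A)$ for every $i=1,\dots,k$; (2) $\Gamma((O^j_B,o^j_B))$ is perpendicular to $\Gamma(B)$ for every $j=1,\dots,l$.
   Context: A bus graph is a finite bipartite graph $G=(\mathcal{B},\mathcal{C};\mathcal{E})$ with $\deg(c)\le 4$ for all $c\in\mathcal{C}$. A realization $\Gamma$ of $G$ in the integer grid is a drawing such that: (1) each $B\in\mathcal{B}$ is drawn as a closed line segment $\Gamma(B)$ along a grid line (a "bus"); (2) each $c\in\mathcal{C}$ is drawn as a grid point $\Gamma(c)$; (3) each edge $(B,c)\in\mathcal{E}$ is drawn as a closed line segment along a grid line between a point of $\Gamma(B)$ and $\Gamma(c)$, perpendicular to $\Gamma(B)$, containing no connectors or buses other than $\Gamma(B)$ and $\Gamma(c)$ (edges may cross other edges); (4) no two buses or connectors intersect. An $(A,B)$-perp consists of three distinct $\mathcal{C}$-vertices $x,y,z$, five distinct $\mathcal{B}$-vertices $A,A',B,B',C$, and the twelve edges $(A,x),(A',x),(B,x),(B',x)$, $(A,y),(A',y),(B,y),(C,y)$, $(A,z),(A',z),(B',z),(C,z)$. An $(A,k,B,l)$-variable-box consists of an $(A,B)$-perp together with additional distinct $\mathcal{C}$-vertices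 $x_A,y_A,z_A,o^1_A,\dots,o^k_A,x_B,y_B,z_B,o^1_B,\dots,o^l_B$, additional distinct $\mathcal{B}$-vertices $R_A,S_A,T_A,U_A,R_B,S_B,T_B,U_B$, and the additional edges: $(A,x_A),(R_A,x_A),(S_A,x_A),(U_A,x_A)$; $(A,y_A),(R_A,y_A),(T_A,y_A),(U_A,y_A)$; $(A,z_A),(S_A,z_A),(T_A,z_A),(U_A,z_A)$; $(R_A,o^i_A),(S_A,o^i_A)$ for $i=1,\dots,k$; $(B,x_B),(R_B,x_B),(S_B,x_B),(U_B,x_B)$; $(B,y_B),(R_B,y_B),(T_B,y_B),(U_B,y_B)$; $(B,z_B),(S_B,z_B),(T_B,z_B),(U_B,z_B)$; $(R_B,o^j_B),(S_B,o^j_B)$ for $j=1,\dots,l$. *)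

theory Defs
  imports "HOL-Analysis.Analysis"
begin

definition bus_graph :: "'b set \<Rightarrow> 'c set \<Rightarrow> ('b \<times> 'c) set \<Rightarrow> bool" where
  "bus_graph Bs Cs E \<longleftrightarrow> finite Bs \<and> finite Cs \<and> E \<subseteq> Bs \<times> Cs \<and>
     (\<forall>c\<in>Cs. card {b. (b, c) \<in> E} \<le> 4)"

datatype orient = Hor | Ver

type_synonym pt = "real \<times> real"

text \<open>A bus is drawn as a closed axis-parallel segment on a grid line:
  (orientation, fixed coordinate, lower end, upper end).\<close>
type_synonym bus_draw = "orient \<times> real \<times> real \<times> real"

fun bus_set :: "bus_draw \<Rightarrow> pt set" where
  "bus_set (Hor, c, lo, hi) = {(x, c) | x. lo \<le> x \<and> x \<le> hi}"
| "bus_set (Ver, c, lo, hi) = {(c, y) | y. lo \<le> y \<and> y \<le> hi}"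

fun valid_bus :: "bus_draw \<Rightarrow> bool" where
  "valid_bus (o', c, lo, hi) \<longleftrightarrow> c \<in> \<int> \<and> lo \<le> hi"

abbreviation bus_orient :: "bus_draw \<Rightarrow> orient" where
  "bus_orient d \<equiv> fst d"

definition perp_to :: "pt \<Rightarrow> pt \<Rightarrow> orient \<Rightarrow> bool" where
  "perp_to p q o' \<longleftrightarrow> p \<noteq> q \<and>
     (if o' = Hor then fst p = fst q else snd p = snd q)"

definition grid_point :: "pt \<Rightarrow> bool" where
  "grid_point p \<longleftrightarrow> fst p \<in> \<int> \<and> snd p \<in> \<int>"

text \<open>A realization: GB draws the buses, GC the connectors, and the edge (B,c)
  is drawn as the closed segment from the attachment point GE B c (on the bus)
  to GC c.\<close>
definition realization ::
  "'b set \<Rightarrow> 'c set \<Rightarrow> ('b \<times> 'c) set \<Rightarrow> ('b \<Rightarrow> bus_draw) \<Rightarrow> ('c \<Rightarrow> pt)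
     \<Rightarrow> ('b \<Rightarrow> 'c \<Rightarrow> pt) \<Rightarrow> bool" where
  "realization Bs Cs E GB GC GE \<longleftrightarrow>
     (\<forall>B\<in>Bs. valid_bus (GB B)) \<and>
     (\<forall>c\<in>Cs. grid_point (GC c)) \<and>
     (\<forall>(B, c)\<in>E.
        GE B c \<in> bus_set (GB B) \<and>
        perp_to (GE B c) (GC c) (bus_orient (GB B)) \<and>
        (\<forall>c'\<in>Cs. c' \<noteq> c \<longrightarrow> GC c' \<notin> closed_segment (GE B c) (GC c)) \<and>
        (\<forall>B'\<in>Bs. B' \<noteq> B \<longrightarrow> bus_set (GB B') \<inter> closed_segment (GE B c) (GC c) = {})) \<and>
     (\<forall>B\<in>Bs. \<forall>B'\<in>Bs. B \<noteq> B' \<longrightarrow> bus_set (GB B) \<inter> bus_set (GB B') = {}) \<and>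
     (\<forall>c\<in>Cs. \<forall>c'\<in>Cs. c \<noteq> c' \<longrightarrow> GC c \<noteq> GC c') \<and>
     (\<forall>B\<in>Bs. \<forall>c\<in>Cs. GC c \<notin> bus_set (GB B))"

definition is_perp :: "('b \<times> 'c) set \<Rightarrow> 'b \<Rightarrow> 'b \<Rightarrow> 'b \<Rightarrow> 'b \<Rightarrow> 'b
    \<Rightarrow> 'c \<Rightarrow> 'c \<Rightarrow> 'c \<Rightarrow> bool" where
  "is_perp E A A' B B' C x y z \<longleftrightarrow>
     distinct [x, y, z] \<and> distinct [A, A', B, B', C] \<and>
     {(A, x), (A', x), (B, x), (B', x),
      (A, y), (A', y), (B, y), (C, y),
      (A, z), (A', z), (B', z), (C, z)} \<subseteq> E"

definition variable_box :: "('b \<times> 'c) set \<Rightarrow> 'b \<Rightarrow> 'b \<Rightarrow> 'b \<Rightarrow> 'b \<Rightarrow> 'b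
    \<Rightarrow> 'c \<Rightarrow> 'c \<Rightarrow> 'c
    \<Rightarrow> 'b \<Rightarrow> 'b \<Rightarrow> 'b \<Rightarrow> 'b \<Rightarrow> 'c \<Rightarrow> 'c \<Rightarrow> 'c \<Rightarrow> nat \<Rightarrow> (nat \<Rightarrow> 'c)
    \<Rightarrow> 'b \<Rightarrow> 'b \<Rightarrow> 'b \<Rightarrow> 'b \<Rightarrow> 'c \<Rightarrow> 'c \<Rightarrow> 'c \<Rightarrow> nat \<Rightarrow> (nat \<Rightarrow> 'c) \<Rightarrow> bool" where
  "variable_box E A A' B B' C x y z RA SA TA UA xA yA zA k oA RB SB TB UB xB yB zB l oB \<longleftrightarrow>
     is_perp E A A' B B' C x y z \<and>
     distinct [x, y, z, xA, yA, zA, xB, yB, zB] \<and>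
     inj_on oA {1..k} \<and> inj_on oB {1..l} \<and>
     oA ` {1..k} \<inter> oB ` {1..l} = {} \<and>
     oA ` {1..k} \<inter> {x, y, z, xA, yA, zA, xB, yB, zB} = {} \<and>
     oB ` {1..l} \<inter> {x, y, z, xA, yA, zA, xB, yB, zB} = {} \<and>
     distinct [A, A', B, B', C, RA, SA, TA, UA, RB, SB, TB, UB] \<and>
     {(A, xA), (RA, xA), (SA, xA), (UA, xA),
      (A, yA), (RA, yA), (TA, yA), (UA, yA),
      (A, zA), (SA, zA), (TA, zA), (UA, zA)} \<subseteq> E \<and>
     (\<forall>i\<in>{1..k}. (RA, oA i) \<in> E \<and> (SA, oA i) \<in> E) \<and>
     {(B, xB), (RB, xB), (SB, xB), (UB, xB),
      (B, yB), (RB, yB), (TB, yB), (UB, yB),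
      (B, zB), (SB, zB), (TB, zB), (UB, zB)} \<subseteq> E \<and>
     (\<forall>j\<in>{1..l}. (RB, oB j) \<in> E \<and> (SB, oB j) \<in> E)"

end

(*
  Two edges at a connector whose buses are parallel lie on one grid line through the
  connector, and they leave it in opposite directions: otherwise the attachment point of
  the shorter edge lies on the longer edge, which must avoid every other bus. So no
  connector has three parallel buses, and a connector of degree four sees two horizontal
  and two vertical buses. Applied to x_A, y_A, z_A, whose bus sets differ by swapping one
  of S_A, R_A for T_A, this makes R_A, S_A, T_A parallel, and A is perpendicular to them
  since it shares x_A with R_A and S_A. The connector o^i_A already carries R_A and S_A,
  so O^i_A is parallel to A, and its edge is perpendicular to A.
*)
theory Submission
  imports Defs
begin

lemma closed_segment_Pair_same_fst:
  "(x, a) \<in> closed_segment (x, b) (x, c) \<longleftrightarrow> a \<in> closed_segment b c"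
  by (auto simp: in_segment algebra_simps)

lemma closed_segment_Pair_same_snd:
  "(a, y) \<in> closed_segment (b, y) (c, y) \<longleftrightarrow> a \<in> closed_segment b c"
  by (auto simp: in_segment algebra_simps)

lemma real_nested_if_same_side:
  fixes a b q :: real
  assumes "(a - q) * (b - q) > 0"
  shows "a \<in> closed_segment b q \<or> b \<in> closed_segment a q"
  using assms by (auto simp: closed_segment_eq_real_ivl zero_less_mult_iff)

lemma perp_to_nested_if_same_side:
  assumes "perp_to p q o'" "perp_to p' q o'" "(p - q) \<bullet> (p' - q) > 0"
  shows "p \<in> closed_segment p' q \<or> p' \<in> closed_segment p q"
proof -
  obtain a b c d e f where pq: "p = (a, b)" "p' = (c, d)" "q = (e, f)"
    by (metis prod.exhaust)
  show ?thesis
  proof (cases o')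
    case Hor
    then have "a = e" "c = e" using assms(1,2) pq by (auto simp: perp_to_def)
    then show ?thesis using real_nested_if_same_side[of b f d] assms(3) pq
      by (simp add: closed_segment_Pair_same_fst)
  next
    case Ver
    then have "b = f" "d = f" using assms(1,2) pq by (auto simp: perp_to_def)
    then show ?thesis using real_nested_if_same_side[of a e c] assms(3) pq
      by (simp add: closed_segment_Pair_same_snd)
  qed
qed

lemma real_two_of_three_same_sign:
  fixes a b c :: real
  assumes "a \<noteq> 0" "b \<noteq> 0" "c \<noteq> 0"
  shows "a * b > 0 \<or> a * c > 0 \<or> b * c > 0"
  using assms by (auto simp: zero_less_mult_iff neq_iff)

lemma perp_to_two_on_same_side:
  assumes "perp_to p1 q o'" "perp_to p2 q o'" "perp_to p3 q o'"
  shows "(p1 - q) \<bullet> (p2 - q) > 0 \<or> (p1 - q) \<bullet> (p3 - q) > 0 \<or> (p2 - q) \<bullet> (p3 - q) > 0"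
proof (cases o')
  case Hor
  then show ?thesis
    using assms real_two_of_three_same_sign[of "snd p1 - snd q" "snd p2 - snd q" "snd p3 - snd q"]
    by (auto simp: perp_to_def prod_eq_iff inner_prod_def)
next
  case Ver
  then show ?thesis
    using assms real_two_of_three_same_sign[of "fst p1 - fst q" "fst p2 - fst q" "fst p3 - fst q"]
    by (auto simp: perp_to_def prod_eq_iff inner_prod_def)
qed

lemma realization_edgeD:
  assumes "realization Bs Cs E GB GC GE" "(B, c) \<in> E"
  shows "GE B c \<in> bus_set (GB B)"
    and "perp_to (GE B c) (GC c) (bus_orient (GB B))"
    and "\<And>B'. B' \<in> Bs \<Longrightarrow> B' \<noteq> B \<Longrightarrow> bus_set (GB B') \<inter> closed_segment (GE B c) (GC c) = {}"
  using assms unfolding realization_def by fast+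

lemma realization_parallel_edges_opposite:
  assumes \<Gamma>: "realization Bs Cs E GB GC GE"
    and "(B1, c) \<in> E" "(B2, c) \<in> E" "B1 \<noteq> B2" "B1 \<in> Bs" "B2 \<in> Bs"
    and "bus_orient (GB B1) = bus_orient (GB B2)"
  shows "(GE B1 c - GC c) \<bullet> (GE B2 c - GC c) \<le> 0"
proof (rule ccontr)
  assume "\<not> (GE B1 c - GC c) \<bullet> (GE B2 c - GC c) \<le> 0"
  then have "GE B1 c \<in> closed_segment (GE B2 c) (GC c) \<or> GE B2 c \<in> closed_segment (GE B1 c) (GC c)"
    using perp_to_nested_if_same_side realization_edgeD(2)[OF \<Gamma>] assms(2-7) by (metis not_le)
  then show False
    using realization_edgeD(1,3)[OF \<Gamma>] assms(2-6) by blast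
qed

lemma realization_no_three_parallel_edges:
  assumes \<Gamma>: "realization Bs Cs E GB GC GE"
    and "(B1, c) \<in> E" "(B2, c) \<in> E" "(B3, c) \<in> E"
    and "distinct [B1, B2, B3]" "B1 \<in> Bs" "B2 \<in> Bs" "B3 \<in> Bs"
    and "bus_orient (GB B1) = bus_orient (GB B2)" "bus_orient (GB B2) = bus_orient (GB B3)"
  shows False
proof -
  have "perp_to (GE B1 c) (GC c) (bus_orient (GB B1))"
    "perp_to (GE B2 c) (GC c) (bus_orient (GB B1))"
    "perp_to (GE B3 c) (GC c) (bus_orient (GB B1))"
    using realization_edgeD(2)[OF \<Gamma> assms(2)] realization_edgeD(2)[OF \<Gamma> assms(3)]
      realization_edgeD(2)[OF \<Gamma> assms(4)] assms(9,10) by simp_all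
  note same_side = perp_to_two_on_same_side[OF this]
  have "(GE B1 c - GC c) \<bullet> (GE B2 c - GC c) \<le> 0"
    "(GE B1 c - GC c) \<bullet> (GE B3 c - GC c) \<le> 0"
    "(GE B2 c - GC c) \<bullet> (GE B3 c - GC c) \<le> 0"
    using realization_parallel_edges_opposite[OF \<Gamma>] assms(2-10) by simp_all
  with same_side show False by linarith
qed

lemma orient_variable_gadget:
  fixes a r s t u :: orient
  assumes "\<not> (a = r \<and> r = s)" "\<not> (a = r \<and> r = u)" "\<not> (a = s \<and> s = u)"
    and "\<not> (a = r \<and> r = t)" "\<not> (r = t \<and> t = u)"
    and "\<not> (a = s \<and> s = t)" "\<not> (s = t \<and> t = u)"
  shows "r = s" and "a \<noteq> r"
  using assms by (cases a; cases r; cases s; cases t; cases u; simp)+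

lemma variable_gadget_orientations:
  assumes \<Gamma>: "realization Bs Cs E GB GC GE" and E: "E \<subseteq> Bs \<times> Cs"
    and "distinct [A, R, S, T, U]"
    and "{(A, x), (R, x), (S, x), (U, x),
          (A, y), (R, y), (T, y), (U, y),
          (A, z), (S, z), (T, z), (U, z)} \<subseteq> E"
  shows "bus_orient (GB R) = bus_orient (GB S)" and "bus_orient (GB A) \<noteq> bus_orient (GB R)"
proof -
  have not_parallel:
    "\<not> (bus_orient (GB b1) = bus_orient (GB b2) \<and> bus_orient (GB b2) = bus_orient (GB b3))"
    if "(b1, c) \<in> E" "(b2, c) \<in> E" "(b3, c) \<in> E" "distinct [b1, b2, b3]" for b1 b2 b3 c
    using realization_no_three_parallel_edges[OF \<Gamma> that] that(1-3) E by blast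
  show "bus_orient (GB R) = bus_orient (GB S)" "bus_orient (GB A) \<noteq> bus_orient (GB R)"
    by (rule orient_variable_gadget[OF not_parallel[of A x R S] not_parallel[of A x R U]
          not_parallel[of A x S U] not_parallel[of A y R T] not_parallel[of R y T U]
          not_parallel[of A z S T] not_parallel[of S z T U]];
        use assms(3,4) in simp)+
qed

lemma variable_gadget_output_perp:
  assumes \<Gamma>: "realization Bs Cs E GB GC GE" and E: "E \<subseteq> Bs \<times> Cs"
    and "distinct [A, R, S, T, U]"
    and "{(A, x), (R, x), (S, x), (U, x),
          (A, y), (R, y), (T, y), (U, y),
          (A, z), (S, z), (T, z), (U, z)} \<subseteq> E"
    and "(R, c) \<in> E" "(S, c) \<in> E" "(Out, c) \<in> E" "Out \<noteq> R" "Out \<noteq> S"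
  shows "perp_to (GE Out c) (GC c) (bus_orient (GB A))"
proof -
  note RS = variable_gadget_orientations[OF assms(1-4)]
  have "bus_orient (GB Out) \<noteq> bus_orient (GB R)"
    using realization_no_three_parallel_edges[OF \<Gamma> assms(5-7)] RS(1) assms(3,8,9)
      assms(5-7)[THEN subsetD[OF E]]
    by auto
  then have "bus_orient (GB Out) = bus_orient (GB A)"
    using RS(2) by (metis orient.exhaust)
  then show ?thesis
    using realization_edgeD(2)[OF \<Gamma> assms(7)] by simp
qed

theorem lemma5:
  fixes Bs :: "'b set" and Cs :: "'c set" and E :: "('b \<times> 'c) set"
    and GB :: "'b \<Rightarrow> bus_draw" and GC :: "'c \<Rightarrow> pt" and GE :: "'b \<Rightarrow> 'c \<Rightarrow> pt"
    and k l :: nat and oA oB :: "nat \<Rightarrow> 'c" and OA OB :: "nat \<Rightarrow> 'b"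
  assumes G: "bus_graph Bs Cs E"
    and box: "variable_box E A A' B B' C x y z RA SA TA UA xA yA zA k oA
                RB SB TB UB xB yB zB l oB"
    and OA_inj: "inj_on OA {1..k}" and OB_inj: "inj_on OB {1..l}"
    and OAB: "OA ` {1..k} \<inter> OB ` {1..l} = {}"
    and OA_new: "OA ` {1..k} \<inter> {A, A', B, B', C, RA, SA, TA, UA, RB, SB, TB, UB} = {}"
    and OB_new: "OB ` {1..l} \<inter> {A, A', B, B', C, RA, SA, TA, UA, RB, SB, TB, UB} = {}"
    and OA_edges: "\<forall>i\<in>{1..k}. (OA i, oA i) \<in> E"
    and OB_edges: "\<forall>j\<in>{1..l}. (OB j, oB j) \<in> E"
    and R: "realization Bs Cs E GB GC GE"
  shows "(\<forall>i\<in>{1..k}. perp_to (GE (OA i) (oA i)) (GC (oA i)) (bus_orient (GB A))) \<and>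
         (\<forall>j\<in>{1..l}. perp_to (GE (OB j) (oB j)) (GC (oB j)) (bus_orient (GB B)))"
proof -
  have E: "E \<subseteq> Bs \<times> Cs" using G unfolding bus_graph_def by blast
  have distinct: "distinct [A, A', B, B', C, RA, SA, TA, UA, RB, SB, TB, UB]"
    and gadget_A: "{(A, xA), (RA, xA), (SA, xA), (UA, xA),
      (A, yA), (RA, yA), (TA, yA), (UA, yA),
      (A, zA), (SA, zA), (TA, zA), (UA, zA)} \<subseteq> E"
    and outputs_A: "\<forall>i\<in>{1..k}. (RA, oA i) \<in> E \<and> (SA, oA i) \<in> E"
    and gadget_B: "{(B, xB), (RB, xB), (SB, xB), (UB, xB),
      (B, yB), (RB, yB), (TB, yB), (UB, yB),
      (B, zB), (SB, zB), (TB, zB), (UB, zB)} \<subseteq> E"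
    and outputs_B: "\<forall>j\<in>{1..l}. (RB, oB j) \<in> E \<and> (SB, oB j) \<in> E"
    using box unfolding variable_box_def by blast+
  have "distinct [A, RA, SA, TA, UA]" "distinct [B, RB, SB, TB, UB]"
    using distinct by auto
  note perp_A = variable_gadget_output_perp[OF R E this(1) gadget_A]
    and perp_B = variable_gadget_output_perp[OF R E this(2) gadget_B]
  show ?thesis
  proof (intro conjI ballI)
    fix i assume "i \<in> {1..k}"
    then show "perp_to (GE (OA i) (oA i)) (GC (oA i)) (bus_orient (GB A))"
      using perp_A outputs_A OA_edges OA_new by blast
  next
    fix j assume "j \<in> {1..l}"
    then show "perp_to (GE (OB j) (oB j)) (GC (oB j)) (bus_orient (GB B))"
      using perp_B outputs_B OB_edges OB_new by blast
  qed
qed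

end
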